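(* Assume no dense set exists, let $\mathcal O\subseteq V$ with $|\mathcal O|\le k$ and $f(\mathcal O)=\mathrm{OPT}$, and let $S'\subseteq V$ satisfy $f(S')\le\alpha\,\mathrm{OPT}$ with $\alpha=3\cdot10^{-3}$. Let $\epsilon=10^{-8}$ and $G=\{o\in\mathcal O: f(o\mid S')\ge\frac{1+\epsilon}{2}\cdot\frac{\mathrm{OPT}}{k}\}$. Then $|G|\ge\eta k$.
   Context: $V$ is a finite ground set; $f:2^V\to\mathbb{R}_{\ge0}$ is monotone, submodular and normalized; $f(e\mid Y)=f(Y\cup\{e\})-f(Y)$. $k$ is a positive integer, $\mathrm{OPT}=\max\{f(S):S\subseteq V,|S|\le k\}$. A set $D$ is dense if $|D|\le\eta k$ and $f(D)\ge\frac{1-\gamma}{2}\mathrm{OPT}$, where $\gamma=10^{-2}$, $\eta=5\cdot10^{-5}$. *)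

theory Defs
  imports Complex_Main
begin

definition normalized :: "('a set \<Rightarrow> real) \<Rightarrow> bool" where
  "normalized f \<longleftrightarrow> f {} = 0"

definition nonneg_on :: "'a set \<Rightarrow> ('a set \<Rightarrow> real) \<Rightarrow> bool" where
  "nonneg_on V f \<longleftrightarrow> (\<forall>S. S \<subseteq> V \<longrightarrow> f S \<ge> 0)"

definition monotone_set_fun :: "'a set \<Rightarrow> ('a set \<Rightarrow> real) \<Rightarrow> bool" where
  "monotone_set_fun V f \<longleftrightarrow> (\<forall>A B. A \<subseteq> B \<and> B \<subseteq> V \<longrightarrow> f A \<le> f B)"

definition submodular :: "'a set \<Rightarrow> ('a set \<Rightarrow> real) \<Rightarrow> bool" where
  "submodular V f \<longleftrightarrow>
     (\<forall>A B. A \<subseteq> V \<and> B \<subseteq> V \<longrightarrow> f (A \<union> B) + f (A \<inter> B) \<le> f A + f B)"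

definition marg :: "('a set \<Rightarrow> real) \<Rightarrow> 'a \<Rightarrow> 'a set \<Rightarrow> real" where
  "marg f e Y = f (Y \<union> {e}) - f Y"

definition OPT :: "'a set \<Rightarrow> ('a set \<Rightarrow> real) \<Rightarrow> nat \<Rightarrow> real" where
  "OPT V f k = Max (f ` {S. S \<subseteq> V \<and> card S \<le> k})"

definition gamma :: real where "gamma = 10 powi (-2)"
definition eta :: real where "eta = 5 * 10 powi (-5)"

definition dense :: "'a set \<Rightarrow> ('a set \<Rightarrow> real) \<Rightarrow> nat \<Rightarrow> 'a set \<Rightarrow> bool" where
  "dense V f k D \<longleftrightarrow> D \<subseteq> V \<and> real (card D) \<le> eta * real k
      \<and> f D \<ge> (1 - gamma) / 2 * OPT V f k"

end

theory Submission
  imports Defs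
begin

text \<open>If fewer than \<open>\<eta> k\<close> elements of \<open>\<O>\<close> are good, the good set \<open>G\<close> is small, so,
  as no dense set exists, \<open>f G < (1 - \<gamma>)/2 \<cdot> OPT\<close>. Submodularity then splits
  \<open>OPT = f \<O> \<le> f (S' \<union> \<O>)\<close> into \<open>f S' + f G\<close> plus the marginal gains over \<open>S'\<close> of the at most
  \<open>k\<close> bad elements, each below \<open>(1 + \<epsilon>)/2 \<cdot> OPT/k\<close>. The total is
  \<open>(\<alpha> + 1 + (\<epsilon> - \<gamma>)/2) \<cdot> OPT < OPT\<close>, because \<open>\<alpha> < (\<gamma> - \<epsilon>)/2\<close>; here \<open>OPT > 0\<close>,
  since otherwise the empty set would be dense.\<close>

lemma monotone_set_funD:
  "monotone_set_fun V f \<Longrightarrow> A \<subseteq> B \<Longrightarrow> B \<subseteq> V \<Longrightarrow> f A \<le> f B"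
  unfolding monotone_set_fun_def by blast

lemma submodularD:
  "submodular V f \<Longrightarrow> A \<subseteq> V \<Longrightarrow> B \<subseteq> V \<Longrightarrow> f (A \<union> B) + f (A \<inter> B) \<le> f A + f B"
  unfolding submodular_def by blast

lemma nonneg_onD: "nonneg_on V f \<Longrightarrow> S \<subseteq> V \<Longrightarrow> f S \<ge> 0"
  unfolding nonneg_on_def by blast

lemma marg_antimono:
  assumes "submodular V f" and "monotone_set_fun V f"
    and "A \<subseteq> C" "C \<subseteq> V" "b \<in> V"
  shows "marg f b C \<le> marg f b A"
proof (cases "b \<in> C")
  case True
  have "f A \<le> f (A \<union> {b})"
    using assms(3-5) by (intro monotone_set_funD[OF assms(2)]) auto
  then show ?thesis using True unfolding marg_def by (simp add: insert_absorb)
next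
  case False
  have "f ((A \<union> {b}) \<union> C) + f ((A \<union> {b}) \<inter> C) \<le> f (A \<union> {b}) + f C"
    using assms(3-5) by (intro submodularD[OF assms(1)]) auto
  moreover have "(A \<union> {b}) \<inter> C = A" "(A \<union> {b}) \<union> C = C \<union> {b}"
    using False assms(3) by auto
  ultimately show ?thesis unfolding marg_def by simp
qed

lemma submodular_subadditive:
  assumes "submodular V f" and "nonneg_on V f" and "A \<subseteq> V" "B \<subseteq> V"
  shows "f (A \<union> B) \<le> f A + f B"
proof -
  have "f (A \<inter> B) \<ge> 0"
    using assms(3) by (intro nonneg_onD[OF assms(2)]) auto
  then show ?thesis using submodularD[OF assms(1,3,4)] by linarith
qed

lemma union_le_add_sum_marg:
  assumes "submodular V f" and "monotone_set_fun V f"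
    and "finite B" "A \<subseteq> V" "B \<subseteq> V"
  shows "f (A \<union> B) \<le> f A + (\<Sum>b\<in>B. marg f b A)"
  using assms(3,5)
proof (induction B rule: finite_induct)
  case empty
  then show ?case by simp
next
  case (insert x F)
  have "marg f x (A \<union> F) \<le> marg f x A"
    using insert.prems assms(4) by (intro marg_antimono[OF assms(1,2)]) auto
  then have "f (A \<union> insert x F) \<le> f (A \<union> F) + marg f x A"
    unfolding marg_def by (simp add: insert_commute)
  then show ?case using insert by simp
qed

lemma le_add_sum_marg_outside:
  assumes "submodular V f" and "monotone_set_fun V f" and "nonneg_on V f"
    and "finite T" "T \<subseteq> V" "S \<subseteq> V" "G \<subseteq> T"
  shows "f T \<le> f S + f G + (\<Sum>x\<in>T - G. marg f x S)"
proof -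
  have SG: "S \<union> G \<subseteq> V" using assms(5-7) by blast
  have "f T \<le> f ((S \<union> G) \<union> (T - G))"
    using SG assms(5) by (intro monotone_set_funD[OF assms(2)]) auto
  also have "\<dots> \<le> f (S \<union> G) + (\<Sum>x\<in>T - G. marg f x (S \<union> G))"
    using assms(4,5) by (intro union_le_add_sum_marg[OF assms(1,2) _ SG]) auto
  also have "(\<Sum>x\<in>T - G. marg f x (S \<union> G)) \<le> (\<Sum>x\<in>T - G. marg f x S)"
    using assms(5) by (intro sum_mono marg_antimono[OF assms(1,2) _ SG]) auto
  also have "f (S \<union> G) \<le> f S + f G"
    using SG by (intro submodular_subadditive[OF assms(1,3,6)]) auto
  finally show ?thesis by simp
qed

lemma OPT_pos_if_no_dense:
  assumes "normalized f" and "\<not> (\<exists>D. dense V f k D)"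
  shows "OPT V f k > 0"
proof (rule ccontr)
  assume "\<not> OPT V f k > 0"
  then have "(1 - gamma) / 2 * OPT V f k \<le> 0"
    by (simp add: gamma_def mult_nonneg_nonpos)
  then have "dense V f k {}"
    using assms(1) unfolding dense_def eta_def normalized_def by simp
  with assms(2) show False by blast
qed

theorem mainTheorem11:
  fixes V :: "'a set" and f :: "'a set \<Rightarrow> real" and k :: nat
    and Os S' :: "'a set" and alpha epsilon :: real
  assumes "finite V"
    and "nonneg_on V f" and "monotone_set_fun V f" and "submodular V f" and "normalized f"
    and "k > 0"
    and no_dense: "\<not> (\<exists>D. dense V f k D)"
    and "Os \<subseteq> V" and "card Os \<le> k" and "f Os = OPT V f k"
    and "alpha = 3 * 10 powi (-3)"
    and "S' \<subseteq> V" and "f S' \<le> alpha * OPT V f k"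
    and "epsilon = 10 powi (-8)"
  shows "real (card {x \<in> Os. marg f x S' \<ge> (1 + epsilon) / 2 * (OPT V f k / real k)})
           \<ge> eta * real k"
proof (rule ccontr)
  define M where "M = OPT V f k"
  define c where "c = (1 + epsilon) / 2 * (M / real k)"
  define G where "G = {x \<in> Os. marg f x S' \<ge> c}"
  assume "\<not> ?thesis"
  then have "real (card G) < eta * real k" unfolding G_def c_def M_def by simp
  moreover have "G \<subseteq> V" using assms(8) unfolding G_def by blast
  ultimately have fG: "f G < (1 - gamma) / 2 * M"
    using no_dense unfolding dense_def M_def by (meson less_imp_le not_le)
  have M_pos: "M > 0" using OPT_pos_if_no_dense[OF assms(5) no_dense] unfolding M_def .
  have finite_Os: "finite Os" using assms(1,8) finite_subset by blast
  have "(\<Sum>x\<in>Os - G. marg f x S') \<le> real (card (Os - G)) * c"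
    by (rule sum_bounded_above) (auto simp: G_def)
  also have "\<dots> \<le> real k * c"
  proof (rule mult_right_mono)
    show "real (card (Os - G)) \<le> real k"
      using card_mono[OF finite_Os, of "Os - G"] assms(9) by simp
    show "c \<ge> 0" using M_pos assms(14) unfolding c_def by simp
  qed
  also have "real k * c = (1 + epsilon) / 2 * M" using assms(6) unfolding c_def by simp
  finally have "M \<le> f S' + f G + (1 + epsilon) / 2 * M"
    using le_add_sum_marg_outside[OF assms(4,3,2) finite_Os assms(8,12), of G] assms(10)
    unfolding G_def M_def by simp
  then have "M < alpha * M + (1 - gamma) / 2 * M + (1 + epsilon) / 2 * M"
    using fG assms(13) unfolding M_def by simp
  then show False using M_pos unfolding assms(11,14) gamma_def by (simp add: field_simps)
qed

end
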